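(* Let the one-period market and the risk measure $\rho: L \to (-\infty,\infty]$ be as described in the context. Assume that $\Pi^\rho_0 = \{\mathbf{0}\}$, that $\rho_1 \in \mathbb{R}$, and that $\rho$ satisfies the Fatou property on $\mathcal{X} = \{X_\pi : \pi \in \mathbb{R}^d\}$, i.e. whenever $X_n, X \in \mathcal{X}$ with $X_n \to X$ $\mathbb{P}$-a.s. and $|X_n| \le Y$ $\mathbb{P}$-a.s. for some $Y \in L$, then $\rho(X) \le \liminf_{n\to\infty} \rho(X_n)$. Then for every $\nu \ge 0$ the set $\Pi^\rho_\nu$ of $\rho$-optimal portfolios for $\nu$ is nonempty and compact.
   Context: Let $(\Omega,\mathcal{F},\mathbb{P})$ be a probability space. The market consists of a riskless asset with $S^0_0 = 1$, $S^0_1 = 1+r$, $r > -1$, and $d$ risky assets $S^1,\dots,S^d$ with constants $S^i_0 > 0$ and real-valued $\mathcal{F}$-measurable $S^i_1$. Returns: $R^i := (S^i_1 - S^i_0)/S^i_0$, $R = (R^1,\dots,R^d)$. Standing assumptions: the market is nonredundant (if $\theta \in \mathbb{R}^{1+d}$ and $\sum_{i=0}^d \theta^i S^i_t = 0$ $\mathbb{P}$-a.s. for $t\in\{0,1\}$, then $\theta = 0$); each $R^i \in L^1(\mathbb{P})$ with $\mu^i := \mathbb{E}[R^i]$; nondegeneracy: $\mu^i \neq r$ for some $i$. A portfolio is $\pi \in \mathbb{R}^d$; its excess return is $X_\pi := \pi\cdot(R - r\mathbf{1})$ with $\mathbf{1} = (1,\dots,1)$. For $\nu \in \mathbb{R}$,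 $\Pi_\nu := \{\pi \in \mathbb{R}^d : \mathbb{E}[X_\pi] = \nu\}$. $L$ is a Riesz space of random variables with $L^\infty \subset L \subset L^1$ containing all $X_\pi$, and $\rho: L \to (-\infty,\infty]$ is monotone ($X_1 \le X_2$ a.s. implies $\rho(X_1) \ge \rho(X_2)$), cash-invariant ($\rho(X+c) = \rho(X) - c$ for $c\in\mathbb{R}$) and positively homogeneous ($\rho(\lambda X) = \lambda\rho(X)$ for $\lambda \ge 0$). For $\nu \ge 0$: $\rho_\nu := \inf\{\rho(X_\pi) : \pi \in \Pi_\nu\} \in [-\infty,\infty]$, and $\Pi^\rho_\nu$ is the set of $\pi \in \Pi_\nu$ with $\rho(X_\pi) < \infty$ and $\rho(X_\pi) \le \rho(X_{\pi'})$ for all $\pi' \in \Pi_\nu$ ($\rho$-optimal portfolios for $\nu$). *)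

theory Defs
  imports "HOL-Probability.Probability"
begin

text \<open>One-period market with riskless rate r, initial prices S0 (a vector in real^'d,
  'd a finite index type of the d risky assets) and terminal prices S1 (random vector).\<close>

definition ret :: "real^'d \<Rightarrow> ('a \<Rightarrow> real^'d) \<Rightarrow> 'a \<Rightarrow> real^'d" where
  "ret S0 S1 \<omega> = (\<chi> i. (S1 \<omega> $ i - S0 $ i) / S0 $ i)"

definition excess_ret :: "real^'d \<Rightarrow> ('a \<Rightarrow> real^'d) \<Rightarrow> real \<Rightarrow> real^'d \<Rightarrow> 'a \<Rightarrow> real" where
  "excess_ret S0 S1 r \<pi> \<omega> = \<pi> \<bullet> (ret S0 S1 \<omega> - (\<chi> i. r))"

definition nonredundant :: "'a measure \<Rightarrow> real^'d \<Rightarrow> ('a \<Rightarrow> real^'d) \<Rightarrow> real \<Rightarrow> bool" where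
  "nonredundant M S0 S1 r \<longleftrightarrow>
     (\<forall>(\<theta>0::real) (\<theta>::real^'d).
        (\<theta>0 + \<theta> \<bullet> S0 = 0 \<and> (AE \<omega> in M. \<theta>0 * (1 + r) + \<theta> \<bullet> S1 \<omega> = 0))
        \<longrightarrow> \<theta>0 = 0 \<and> \<theta> = 0)"

definition Pi_nu :: "'a measure \<Rightarrow> real^'d \<Rightarrow> ('a \<Rightarrow> real^'d) \<Rightarrow> real \<Rightarrow> real \<Rightarrow> (real^'d) set" where
  "Pi_nu M S0 S1 r \<nu> = {\<pi>. (\<integral>\<omega>. excess_ret S0 S1 r \<pi> \<omega> \<partial>M) = \<nu>}"

definition rho_nu :: "'a measure \<Rightarrow> real^'d \<Rightarrow> ('a \<Rightarrow> real^'d) \<Rightarrow> real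
    \<Rightarrow> (('a \<Rightarrow> real) \<Rightarrow> ereal) \<Rightarrow> real \<Rightarrow> ereal" where
  "rho_nu M S0 S1 r \<rho> \<nu> = (INF \<pi>\<in>Pi_nu M S0 S1 r \<nu>. \<rho> (excess_ret S0 S1 r \<pi>))"

definition rho_opt :: "'a measure \<Rightarrow> real^'d \<Rightarrow> ('a \<Rightarrow> real^'d) \<Rightarrow> real
    \<Rightarrow> (('a \<Rightarrow> real) \<Rightarrow> ereal) \<Rightarrow> real \<Rightarrow> (real^'d) set" where
  "rho_opt M S0 S1 r \<rho> \<nu> = {\<pi> \<in> Pi_nu M S0 S1 r \<nu>.
      \<rho> (excess_ret S0 S1 r \<pi>) < \<infinity> \<and>
      (\<forall>\<pi>'\<in>Pi_nu M S0 S1 r \<nu>. \<rho> (excess_ret S0 S1 r \<pi>) \<le> \<rho> (excess_ret S0 S1 r \<pi>'))}"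

definition riesz_L :: "'a measure \<Rightarrow> ('a \<Rightarrow> real) set \<Rightarrow> bool" where
  "riesz_L M L \<longleftrightarrow>
     L \<subseteq> borel_measurable M \<and>
     (\<forall>f\<in>L. \<forall>g\<in>L. (\<lambda>\<omega>. f \<omega> + g \<omega>) \<in> L) \<and>
     (\<forall>f\<in>L. \<forall>c::real. (\<lambda>\<omega>. c * f \<omega>) \<in> L) \<and>
     (\<forall>f\<in>L. \<forall>g\<in>L. (\<lambda>\<omega>. max (f \<omega>) (g \<omega>)) \<in> L \<and> (\<lambda>\<omega>. min (f \<omega>) (g \<omega>)) \<in> L) \<and>
     (\<forall>f\<in>borel_measurable M. (\<exists>C. AE \<omega> in M. \<bar>f \<omega>\<bar> \<le> C) \<longrightarrow> f \<in> L) \<and>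
     (\<forall>f\<in>L. integrable M f)"

definition risk_measure :: "'a measure \<Rightarrow> ('a \<Rightarrow> real) set \<Rightarrow> (('a \<Rightarrow> real) \<Rightarrow> ereal) \<Rightarrow> bool" where
  "risk_measure M L \<rho> \<longleftrightarrow>
     (\<forall>X\<in>L. \<rho> X \<noteq> -\<infinity>) \<and>
     (\<forall>X1\<in>L. \<forall>X2\<in>L. (AE \<omega> in M. X1 \<omega> \<le> X2 \<omega>) \<longrightarrow> \<rho> X1 \<ge> \<rho> X2) \<and>
     (\<forall>X\<in>L. \<forall>c::real. \<rho> (\<lambda>\<omega>. X \<omega> + c) = \<rho> X - ereal c) \<and>
     (\<forall>X\<in>L. \<forall>a::real. a \<ge> 0 \<longrightarrow> \<rho> (\<lambda>\<omega>. a * X \<omega>) = ereal a * \<rho> X)"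

definition fatou_on_excess :: "'a measure \<Rightarrow> ('a \<Rightarrow> real) set \<Rightarrow> real^'d \<Rightarrow> ('a \<Rightarrow> real^'d)
    \<Rightarrow> real \<Rightarrow> (('a \<Rightarrow> real) \<Rightarrow> ereal) \<Rightarrow> bool" where
  "fatou_on_excess M L S0 S1 r \<rho> \<longleftrightarrow>
     (\<forall>(\<pi>s :: nat \<Rightarrow> real^'d) (\<pi> :: real^'d) Y.
        (AE \<omega> in M. (\<lambda>n. excess_ret S0 S1 r (\<pi>s n) \<omega>) \<longlonglongrightarrow> excess_ret S0 S1 r \<pi> \<omega>)
        \<and> Y \<in> L \<and> (\<forall>n. AE \<omega> in M. \<bar>excess_ret S0 S1 r (\<pi>s n) \<omega>\<bar> \<le> Y \<omega>)
        \<longrightarrow> \<rho> (excess_ret S0 S1 r \<pi>) \<le> liminf (\<lambda>n. \<rho> (excess_ret S0 S1 r (\<pi>s n))))"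

end

(*
  Put f \<pi> = \<rho>(X_\<pi>) and m = E[R] - r 1, so that \<Pi>_\<nu> is the hyperplane \<pi> \<bullet> m = \<nu>.
  The Fatou property makes f sequentially lower semicontinuous, since portfolios from a
  bounded set have excess returns dominated by a multiple of \<Sum>_i |X_e_i|; and since f is
  positively homogeneous with f 0 = 0, \<Pi>^\<rho>_0 = {0} forces f > 0 on {\<pi> \<bullet> m = 0} - {0}.
  Hence the sublevel sets {\<pi> \<bullet> m = \<nu>, f \<pi> \<le> C} are bounded: along an unbounded sequence in
  one of them the normalised portfolios accumulate at a unit vector l with l \<bullet> m = 0 and
  f l \<le> 0.  Being closed by lower semicontinuity, they are compact, so f attains its minimum
  on the one through the finite-risk portfolio \<nu> \<pi>_1 (\<pi>_1 \<in> \<Pi>_1 with \<rho>(X_\<pi>_1) < \<infinity>), and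
  the optimal set is the sublevel set at the minimal value.
*)

theory Submission
  imports Defs
begin

definition seq_lower_semicontinuous :: "('a::topological_space \<Rightarrow> 'b::complete_lattice) \<Rightarrow> bool" where
  "seq_lower_semicontinuous f \<longleftrightarrow> (\<forall>p q. p \<longlonglongrightarrow> q \<longrightarrow> f q \<le> liminf (\<lambda>n. f (p n)))"

lemma seq_lower_semicontinuousD:
  "seq_lower_semicontinuous f \<Longrightarrow> p \<longlonglongrightarrow> q \<Longrightarrow> f q \<le> liminf (\<lambda>n. f (p n))"
  unfolding seq_lower_semicontinuous_def by blast

lemma closed_sublevel_seq_lower_semicontinuous:
  fixes f :: "'a::first_countable_topology \<Rightarrow> 'b::complete_linorder"
  assumes "seq_lower_semicontinuous f" and "closed S"
  shows "closed {x \<in> S. f x \<le> c}"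
  unfolding closed_sequential_limits
proof (intro allI impI, elim conjE)
  fix p l assume p: "\<forall>n. p n \<in> {x \<in> S. f x \<le> c}" and "p \<longlonglongrightarrow> l"
  have "l \<in> S"
    using p \<open>p \<longlonglongrightarrow> l\<close> \<open>closed S\<close> closed_sequentially by blast
  have "f l \<le> liminf (\<lambda>n. f (p n))"
    using assms(1) \<open>p \<longlonglongrightarrow> l\<close> by (rule seq_lower_semicontinuousD)
  also have "\<dots> \<le> liminf (\<lambda>n. c)"
    using p by (intro Liminf_mono always_eventually) auto
  finally show "l \<in> {x \<in> S. f x \<le> c}"
    using \<open>l \<in> S\<close> by (simp add: Liminf_const)
qed

lemma seq_lower_semicontinuous_attains_min:
  fixes f :: "'a::metric_space \<Rightarrow> 'b::{complete_linorder, linorder_topology, first_countable_topology}"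
  assumes "seq_lower_semicontinuous f" and "compact K" and "K \<noteq> {}"
  obtains x where "x \<in> K" and "\<And>y. y \<in> K \<Longrightarrow> f x \<le> f y"
proof -
  obtain w where w: "\<And>n. w n \<in> f ` K" and "w \<longlonglongrightarrow> Inf (f ` K)"
    using Inf_as_limit[of "f ` K"] \<open>K \<noteq> {}\<close> by blast
  then have "\<forall>n. \<exists>x\<in>K. w n = f x"
    by blast
  then obtain p where p: "\<And>n. p n \<in> K" and w_eq: "\<And>n. w n = f (p n)"
    by metis
  obtain x s where "x \<in> K" "strict_mono s" and px: "(p \<circ> s) \<longlonglongrightarrow> x"
    using compact_imp_seq_compact[OF \<open>compact K\<close>] p by (metis seq_compactE)
  have "f x \<le> liminf (\<lambda>n. f ((p \<circ> s) n))"
    using assms(1) px by (rule seq_lower_semicontinuousD)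
  also have "\<dots> = liminf (w \<circ> s)"
    by (simp add: w_eq comp_def)
  also have "\<dots> = Inf (f ` K)"
    using \<open>w \<longlonglongrightarrow> Inf (f ` K)\<close> \<open>strict_mono s\<close>
    by (intro lim_imp_Liminf trivial_limit_sequentially LIMSEQ_subseq_LIMSEQ)
  finally show thesis
    using \<open>x \<in> K\<close> by (meson INF_lower order.trans that)
qed

lemma unbounded_imp_norm_filterlim_at_top:
  fixes S :: "'a::real_normed_vector set"
  assumes "\<not> bounded S"
  obtains x where "\<And>n. x n \<in> S" and "filterlim (\<lambda>n. norm (x n)) at_top sequentially"
proof -
  have "\<forall>n::nat. \<exists>y\<in>S. real n < norm y"
    using assms unfolding bounded_iff by (meson not_le)
  then obtain x where x: "\<And>n. x n \<in> S" "\<And>n. real n < norm (x n)"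
    by metis
  have "filterlim (\<lambda>n. norm (x n)) at_top sequentially"
    by (rule filterlim_at_top_mono[OF filterlim_real_sequentially])
      (use x(2) in \<open>auto intro!: always_eventually less_imp_le\<close>)
  with x(1) show thesis by (rule that)
qed

lemma positively_homogeneous_direction_limit_nonpos:
  fixes f :: "'a::real_normed_vector \<Rightarrow> ereal"
  assumes lsc: "seq_lower_semicontinuous f"
    and hom: "\<And>a x. 0 \<le> a \<Longrightarrow> f (a *\<^sub>R x) = ereal a * f x"
    and bound: "\<And>n. f (x n) \<le> ereal C"
    and norm_x: "filterlim (\<lambda>n. norm (x n)) at_top sequentially"
    and direction: "(\<lambda>n. x n /\<^sub>R norm (x n)) \<longlonglongrightarrow> l"
  shows "f l \<le> 0"
proof -
  have C_div: "(\<lambda>n. C / norm (x n)) \<longlonglongrightarrow> 0"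
    using norm_x by (intro tendsto_divide_0[OF tendsto_const] filterlim_at_top_imp_at_infinity)
  have "\<forall>\<^sub>F n in sequentially. f (x n /\<^sub>R norm (x n)) \<le> ereal (C / norm (x n))"
    using norm_x unfolding filterlim_at_top_dense
  proof (elim allE[of _ 0] eventually_mono)
    fix n assume pos: "0 < norm (x n)"
    have "f (x n /\<^sub>R norm (x n)) = ereal (1 / norm (x n)) * f (x n)"
      using hom[of "1 / norm (x n)" "x n"] by (simp add: divide_inverse_commute)
    also have "\<dots> \<le> ereal (1 / norm (x n)) * ereal C"
      using pos bound by (intro ereal_mult_left_mono) auto
    finally show "f (x n /\<^sub>R norm (x n)) \<le> ereal (C / norm (x n))" by simp
  qed
  then have "liminf (\<lambda>n. f (x n /\<^sub>R norm (x n))) \<le> liminf (\<lambda>n. ereal (C / norm (x n)))"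
    by (rule Liminf_mono)
  also have "\<dots> = 0"
    using C_div unfolding zero_ereal_def
    by (intro lim_imp_Liminf trivial_limit_sequentially tendsto_ereal)
  finally show ?thesis
    using seq_lower_semicontinuousD[OF lsc direction] by simp
qed

lemma bounded_sublevel_on_hyperplane:
  fixes f :: "'a::euclidean_space \<Rightarrow> ereal"
  assumes lsc: "seq_lower_semicontinuous f"
    and hom: "\<And>a x. 0 \<le> a \<Longrightarrow> f (a *\<^sub>R x) = ereal a * f x"
    and pos: "\<And>x. x \<bullet> m = 0 \<Longrightarrow> x \<noteq> 0 \<Longrightarrow> 0 < f x"
  shows "bounded {x. x \<bullet> m = \<nu> \<and> f x \<le> ereal C}"
proof (rule ccontr)
  assume "\<not> bounded {x. x \<bullet> m = \<nu> \<and> f x \<le> ereal C}"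
  then obtain x where x: "\<And>n. x n \<bullet> m = \<nu>" "\<And>n. f (x n) \<le> ereal C"
    and norm_x: "filterlim (\<lambda>n. norm (x n)) at_top sequentially"
    by (rule unbounded_imp_norm_filterlim_at_top) blast
  define u where "u n = x n /\<^sub>R norm (x n)" for n
  have "\<forall>\<^sub>F n in sequentially. norm (u n) = 1"
    using norm_x unfolding filterlim_at_top_dense u_def
    by (elim allE[of _ 0] eventually_mono) simp
  then obtain N where "\<And>n. n \<ge> N \<Longrightarrow> u n \<in> sphere 0 1"
    unfolding eventually_sequentially by auto
  then obtain l s where l: "l \<in> sphere 0 1" and "strict_mono s"
    and ul: "(\<lambda>n. u (s n + N)) \<longlonglongrightarrow> l"
    using compact_imp_seq_compact[OF compact_sphere[of 0 1]]
    by (auto elim!: seq_compactE[where f="\<lambda>n. u (n + N)"] simp: comp_def)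
  define y where "y n = x (s n + N)" for n
  have norm_y: "filterlim (\<lambda>n. norm (y n)) at_top sequentially"
    unfolding y_def
    by (rule filterlim_compose[OF norm_x filterlim_add_const_nat_at_top[THEN filterlim_compose,
          OF filterlim_subseq[OF \<open>strict_mono s\<close>]]])
  have "(\<lambda>n. u (s n + N) \<bullet> m) \<longlonglongrightarrow> l \<bullet> m"
    by (intro tendsto_intros ul)
  moreover have "(\<lambda>n. u (s n + N) \<bullet> m) = (\<lambda>n. \<nu> / norm (y n))"
    by (simp add: u_def y_def x(1) divide_inverse_commute)
  moreover have "(\<lambda>n. \<nu> / norm (y n)) \<longlonglongrightarrow> 0"
    using norm_y by (intro tendsto_divide_0[OF tendsto_const] filterlim_at_top_imp_at_infinity)
  ultimately have "l \<bullet> m = 0"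
    using LIMSEQ_unique by metis
  moreover have "f l \<le> 0"
    using lsc hom x(2) norm_y ul unfolding y_def u_def
    by (rule positively_homogeneous_direction_limit_nonpos)
  ultimately show False
    using pos l by fastforce
qed

lemma positively_homogeneous_argmin_on_hyperplane:
  fixes f :: "'a::euclidean_space \<Rightarrow> ereal"
  assumes lsc: "seq_lower_semicontinuous f"
    and hom: "\<And>a x. 0 \<le> a \<Longrightarrow> f (a *\<^sub>R x) = ereal a * f x"
    and pos: "\<And>x. x \<bullet> m = 0 \<Longrightarrow> x \<noteq> 0 \<Longrightarrow> 0 < f x"
    and not_minf: "\<And>x. f x \<noteq> -\<infinity>"
    and x0: "x0 \<bullet> m = \<nu>" "f x0 < \<infinity>"
  shows "{x. x \<bullet> m = \<nu> \<and> f x < \<infinity> \<and> (\<forall>y. y \<bullet> m = \<nu> \<longrightarrow> f x \<le> f y)} \<noteq> {} \<and>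
    compact {x. x \<bullet> m = \<nu> \<and> f x < \<infinity> \<and> (\<forall>y. y \<bullet> m = \<nu> \<longrightarrow> f x \<le> f y)}"
    (is "?A \<noteq> {} \<and> compact ?A")
proof -
  define K where "K C = {x. x \<bullet> m = \<nu> \<and> f x \<le> ereal C}" for C
  have compact_K: "compact (K C)" for C
  proof (rule compact_eq_bounded_closed[THEN iffD2, OF conjI])
    show "bounded (K C)"
      unfolding K_def using lsc hom pos by (rule bounded_sublevel_on_hyperplane)
    show "closed (K C)"
      using closed_sublevel_seq_lower_semicontinuous[OF lsc closed_hyperplane, of m \<nu> "ereal C"]
      by (simp add: K_def inner_commute)
  qed
  obtain c0 where c0: "f x0 = ereal c0"
    using x0(2) not_minf by (cases "f x0") auto
  then have "x0 \<in> K c0"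
    using x0(1) by (simp add: K_def)
  then obtain l where l: "l \<in> K c0" and l_min_K: "\<And>y. y \<in> K c0 \<Longrightarrow> f l \<le> f y"
    using seq_lower_semicontinuous_attains_min[OF lsc compact_K] by blast
  \<comment> \<open>points outside \<open>K c0\<close> are already worse than \<open>x0 \<in> K c0\<close>\<close>
  have l_min: "f l \<le> f y" if "y \<bullet> m = \<nu>" for y
    using l_min_K[of y] l_min_K[OF \<open>x0 \<in> K c0\<close>] c0 that
    by (cases "f y \<le> ereal c0") (auto simp: K_def)
  obtain c where c: "f l = ereal c"
    using l not_minf by (cases "f l") (auto simp: K_def)
  have "?A = K c"
    using l l_min c by (auto simp: K_def intro: order.trans)
  then show ?thesis
    using l c compact_K by (auto simp: K_def)
qed

definition mean_excess_ret :: "'a measure \<Rightarrow> real^'d \<Rightarrow> ('a \<Rightarrow> real^'d) \<Rightarrow> real \<Rightarrow> real^'d" where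
  "mean_excess_ret M S0 S1 r = (\<chi> i. (\<integral>\<omega>. ret S0 S1 \<omega> $ i \<partial>M) - r)"

lemma excess_ret_scaleR: "excess_ret S0 S1 r (a *\<^sub>R \<pi>) = (\<lambda>\<omega>. a * excess_ret S0 S1 r \<pi> \<omega>)"
  by (simp add: excess_ret_def fun_eq_iff)

lemma integral_excess_ret:
  assumes "prob_space M" and "\<And>i. integrable M (\<lambda>\<omega>. ret S0 S1 \<omega> $ i)"
  shows "(\<integral>\<omega>. excess_ret S0 S1 r \<pi> \<omega> \<partial>M) = \<pi> \<bullet> mean_excess_ret M S0 S1 r"
proof -
  interpret prob_space M by fact
  have "(\<integral>\<omega>. excess_ret S0 S1 r \<pi> \<omega> \<partial>M) = (\<integral>\<omega>. (\<Sum>i\<in>UNIV. \<pi> $ i * (ret S0 S1 \<omega> $ i - r)) \<partial>M)"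
    by (simp add: excess_ret_def inner_vec_def)
  also have "\<dots> = (\<Sum>i\<in>UNIV. \<pi> $ i * ((\<integral>\<omega>. ret S0 S1 \<omega> $ i \<partial>M) - r))"
    using assms(2) by (simp add: integral_sum integral_diff prob_space)
  finally show ?thesis
    by (simp add: mean_excess_ret_def inner_vec_def)
qed

lemma Pi_nu_eq_hyperplane:
  assumes "prob_space M" and "\<And>i. integrable M (\<lambda>\<omega>. ret S0 S1 \<omega> $ i)"
  shows "Pi_nu M S0 S1 r \<nu> = {\<pi>. \<pi> \<bullet> mean_excess_ret M S0 S1 r = \<nu>}"
  using integral_excess_ret[OF assms] by (simp add: Pi_nu_def)

lemma abs_excess_ret_le:
  "\<bar>excess_ret S0 S1 r \<pi> \<omega>\<bar> \<le> norm \<pi> * (\<Sum>i\<in>UNIV. \<bar>excess_ret S0 S1 r (axis i 1) \<omega>\<bar>)"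
proof -
  define v where "v = ret S0 S1 \<omega> - (\<chi> i. r)"
  have "\<bar>excess_ret S0 S1 r \<pi> \<omega>\<bar> = \<bar>\<Sum>i\<in>UNIV. \<pi> $ i * v $ i\<bar>"
    by (simp add: excess_ret_def v_def inner_vec_def)
  also have "\<dots> \<le> (\<Sum>i\<in>UNIV. \<bar>\<pi> $ i\<bar> * \<bar>v $ i\<bar>)"
    using sum_abs[of "\<lambda>i. \<pi> $ i * v $ i" UNIV] by (simp add: abs_mult)
  also have "\<dots> \<le> (\<Sum>i\<in>UNIV. norm \<pi> * \<bar>v $ i\<bar>)"
    by (intro sum_mono mult_right_mono component_le_norm_cart) auto
  finally show ?thesis
    by (simp add: excess_ret_def v_def inner_axis' sum_distrib_left)
qed

lemma riesz_L_abs: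
  assumes "riesz_L M L" and "X \<in> L"
  shows "(\<lambda>\<omega>. \<bar>X \<omega>\<bar>) \<in> L"
proof -
  have smult: "\<forall>f\<in>L. \<forall>c. (\<lambda>\<omega>. c * f \<omega>) \<in> L"
    and max: "\<forall>f\<in>L. \<forall>g\<in>L. (\<lambda>\<omega>. max (f \<omega>) (g \<omega>)) \<in> L \<and> (\<lambda>\<omega>. min (f \<omega>) (g \<omega>)) \<in> L"
    using assms(1) unfolding riesz_L_def by simp_all
  have "(\<lambda>\<omega>. (-1) * X \<omega>) \<in> L"
    by (rule smult[rule_format, OF assms(2)])
  then have "(\<lambda>\<omega>. max (X \<omega>) ((-1) * X \<omega>)) \<in> L"
    using max[rule_format, OF assms(2)] by blast
  moreover have "(\<lambda>\<omega>. max (X \<omega>) ((-1) * X \<omega>)) = (\<lambda>\<omega>. \<bar>X \<omega>\<bar>)"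
    by (auto simp: fun_eq_iff)
  ultimately show ?thesis
    by (simp only:)
qed

lemma riesz_L_sum:
  assumes "riesz_L M L" and "finite A" and "\<And>i. i \<in> A \<Longrightarrow> X i \<in> L"
  shows "(\<lambda>\<omega>. \<Sum>i\<in>A. X i \<omega>) \<in> L"
  using assms(2,3)
proof (induction A rule: finite_induct)
  case empty
  have "\<forall>f\<in>borel_measurable M. (\<exists>C. AE \<omega> in M. \<bar>f \<omega>\<bar> \<le> C) \<longrightarrow> f \<in> L"
    using assms(1) unfolding riesz_L_def by blast
  then have "(\<lambda>\<omega>. 0) \<in> L"
    by force
  then show ?case
    by simp
next
  case (insert j A)
  have add: "\<forall>f\<in>L. \<forall>g\<in>L. (\<lambda>\<omega>. f \<omega> + g \<omega>) \<in> L"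
    using assms(1) unfolding riesz_L_def by blast
  have "X j \<in> L" and "(\<lambda>\<omega>. \<Sum>i\<in>A. X i \<omega>) \<in> L"
    using insert.IH insert.prems by simp_all
  then have "(\<lambda>\<omega>. X j \<omega> + (\<Sum>i\<in>A. X i \<omega>)) \<in> L"
    by (rule add[rule_format])
  then show ?case
    using insert.hyps by simp
qed

lemma fatou_on_excess_imp_seq_lower_semicontinuous:
  fixes S0 :: "real^'d"
  assumes "riesz_L M L" and L: "\<And>\<pi>. excess_ret S0 S1 r \<pi> \<in> L"
    and "fatou_on_excess M L S0 S1 r \<rho>"
  shows "seq_lower_semicontinuous (\<lambda>\<pi>. \<rho> (excess_ret S0 S1 r \<pi>))"
  unfolding seq_lower_semicontinuous_def
proof (intro allI impI)
  fix p :: "nat \<Rightarrow> real^'d" and q assume "p \<longlonglongrightarrow> q"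
  then obtain B where B: "\<And>n. norm (p n) \<le> B"
    using convergent_imp_bounded[OF \<open>p \<longlonglongrightarrow> q\<close>] unfolding bounded_iff by auto
  define Y where "Y \<omega> = B * (\<Sum>i\<in>UNIV. \<bar>excess_ret S0 S1 r (axis i 1) \<omega>\<bar>)" for \<omega>
  have smult: "\<forall>f\<in>L. \<forall>c. (\<lambda>\<omega>. c * f \<omega>) \<in> L"
    using assms(1) unfolding riesz_L_def by blast
  have "Y \<in> L"
    unfolding Y_def
    by (rule smult[rule_format, OF riesz_L_sum[OF assms(1) finite riesz_L_abs[OF assms(1) L]]])
  have "\<bar>excess_ret S0 S1 r (p n) \<omega>\<bar> \<le> Y \<omega>" for n \<omega>
  proof -
    have "\<bar>excess_ret S0 S1 r (p n) \<omega>\<bar> \<le> norm (p n) * (\<Sum>i\<in>UNIV. \<bar>excess_ret S0 S1 r (axis i 1) \<omega>\<bar>)"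
      by (rule abs_excess_ret_le)
    also have "\<dots> \<le> Y \<omega>"
      unfolding Y_def by (intro mult_right_mono B sum_nonneg) auto
    finally show ?thesis .
  qed
  moreover have "(\<lambda>n. excess_ret S0 S1 r (p n) \<omega>) \<longlonglongrightarrow> excess_ret S0 S1 r q \<omega>" for \<omega>
    unfolding excess_ret_def by (intro tendsto_intros \<open>p \<longlonglongrightarrow> q\<close>)
  ultimately show "\<rho> (excess_ret S0 S1 r q) \<le> liminf (\<lambda>n. \<rho> (excess_ret S0 S1 r (p n)))"
    using \<open>Y \<in> L\<close> by (intro assms(3)[unfolded fatou_on_excess_def, rule_format, of p q Y]) simp
qed

lemma risk_measure_excess_ret_scaleR:
  assumes "risk_measure M L \<rho>" and "\<And>\<pi>. excess_ret S0 S1 r \<pi> \<in> L" and "0 \<le> a"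
  shows "\<rho> (excess_ret S0 S1 r (a *\<^sub>R \<pi>)) = ereal a * \<rho> (excess_ret S0 S1 r \<pi>)"
proof -
  have "\<forall>X\<in>L. \<forall>a::real. a \<ge> 0 \<longrightarrow> \<rho> (\<lambda>\<omega>. a * X \<omega>) = ereal a * \<rho> X"
    using assms(1) unfolding risk_measure_def by (elim conjE)
  then show ?thesis
    using assms(2,3) by (simp add: excess_ret_scaleR)
qed

lemma rho_opt_eq_argmin_on_hyperplane:
  assumes "prob_space M" and "\<And>i. integrable M (\<lambda>\<omega>. ret S0 S1 \<omega> $ i)"
  shows "rho_opt M S0 S1 r \<rho> \<nu> =
    {\<pi>. \<pi> \<bullet> mean_excess_ret M S0 S1 r = \<nu> \<and> \<rho> (excess_ret S0 S1 r \<pi>) < \<infinity> \<and>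
      (\<forall>\<pi>'. \<pi>' \<bullet> mean_excess_ret M S0 S1 r = \<nu> \<longrightarrow> \<rho> (excess_ret S0 S1 r \<pi>) \<le> \<rho> (excess_ret S0 S1 r \<pi>'))}"
  unfolding rho_opt_def Pi_nu_eq_hyperplane[OF assms] by blast

lemma risk_measure_excess_ret_not_minf:
  assumes "risk_measure M L \<rho>" and "\<And>\<pi>. excess_ret S0 S1 r \<pi> \<in> L"
  shows "\<rho> (excess_ret S0 S1 r \<pi>) \<noteq> -\<infinity>"
proof -
  have "\<forall>X\<in>L. \<rho> X \<noteq> -\<infinity>"
    using assms(1) unfolding risk_measure_def by (elim conjE)
  then show ?thesis
    using assms(2) by simp
qed

lemma risk_pos_if_rho_opt_zero_eq_zero:
  assumes "prob_space M" and "\<And>i. integrable M (\<lambda>\<omega>. ret S0 S1 \<omega> $ i)"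
    and "risk_measure M L \<rho>" and "\<And>\<pi>. excess_ret S0 S1 r \<pi> \<in> L"
    and opt_zero: "rho_opt M S0 S1 r \<rho> 0 = {0}"
    and "\<pi> \<bullet> mean_excess_ret M S0 S1 r = 0" and "\<pi> \<noteq> 0"
  shows "0 < \<rho> (excess_ret S0 S1 r \<pi>)"
proof (rule ccontr)
  note opt = rho_opt_eq_argmin_on_hyperplane[OF assms(1,2)]
  have "\<rho> (excess_ret S0 S1 r 0) = 0"
    using risk_measure_excess_ret_scaleR[OF assms(3,4), of 0 0] by (simp add: zero_ereal_def[symmetric])
  moreover have "0 \<in> rho_opt M S0 S1 r \<rho> 0"
    using opt_zero by simp
  ultimately have nonneg: "0 \<le> \<rho> (excess_ret S0 S1 r \<pi>')"
    if "\<pi>' \<bullet> mean_excess_ret M S0 S1 r = 0" for \<pi>'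
    using that unfolding opt by auto
  assume "\<not> 0 < \<rho> (excess_ret S0 S1 r \<pi>)"
  then have "\<rho> (excess_ret S0 S1 r \<pi>) \<le> 0"
    by simp
  then have "\<pi> \<in> rho_opt M S0 S1 r \<rho> 0"
    using assms(6) nonneg unfolding opt by (auto intro: order.trans le_less_trans)
  with opt_zero \<open>\<pi> \<noteq> 0\<close> show False
    by simp
qed

lemma finite_risk_portfolio_exists:
  assumes "prob_space M" and "\<And>i. integrable M (\<lambda>\<omega>. ret S0 S1 \<omega> $ i)"
    and "risk_measure M L \<rho>" and "\<And>\<pi>. excess_ret S0 S1 r \<pi> \<in> L"
    and "rho_nu M S0 S1 r \<rho> 1 \<noteq> \<infinity>" and "0 \<le> \<nu>"
  obtains \<pi> where "\<pi> \<bullet> mean_excess_ret M S0 S1 r = \<nu>" and "\<rho> (excess_ret S0 S1 r \<pi>) < \<infinity>"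
proof -
  have "(INF \<pi>\<in>{\<pi>. \<pi> \<bullet> mean_excess_ret M S0 S1 r = 1}. \<rho> (excess_ret S0 S1 r \<pi>)) < \<infinity>"
    using assms(5) unfolding rho_nu_def Pi_nu_eq_hyperplane[OF assms(1,2)] by (simp add: less_top)
  then obtain \<pi>1 where "\<pi>1 \<bullet> mean_excess_ret M S0 S1 r = 1" and "\<rho> (excess_ret S0 S1 r \<pi>1) < \<infinity>"
    unfolding INF_less_iff by blast
  moreover have "\<rho> (excess_ret S0 S1 r (\<nu> *\<^sub>R \<pi>1)) = ereal \<nu> * \<rho> (excess_ret S0 S1 r \<pi>1)"
    using assms(3,4,6) by (rule risk_measure_excess_ret_scaleR)
  ultimately show thesis
    using risk_measure_excess_ret_not_minf[OF assms(3,4), of \<pi>1]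
    by (intro that[of "\<nu> *\<^sub>R \<pi>1"]) (cases "\<rho> (excess_ret S0 S1 r \<pi>1)"; simp)+
qed

theorem theorem3p11:
  fixes M :: "'a measure" and S0 :: "real^'d" and S1 :: "'a \<Rightarrow> real^'d" and r :: real
    and L :: "('a \<Rightarrow> real) set" and \<rho> :: "('a \<Rightarrow> real) \<Rightarrow> ereal"
  assumes "prob_space M"
    and "r > -1"
    and "\<forall>i. S0 $ i > 0"
    and "S1 \<in> borel_measurable M"
    and "nonredundant M S0 S1 r"
    and "\<forall>i. integrable M (\<lambda>\<omega>. ret S0 S1 \<omega> $ i)"
    and "\<exists>i. (\<integral>\<omega>. ret S0 S1 \<omega> $ i \<partial>M) \<noteq> r"
    and "riesz_L M L"
    and "\<forall>\<pi>. excess_ret S0 S1 r \<pi> \<in> L"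
    and "risk_measure M L \<rho>"
    and "rho_opt M S0 S1 r \<rho> 0 = {0}"
    and "rho_nu M S0 S1 r \<rho> 1 \<noteq> \<infinity>" and "rho_nu M S0 S1 r \<rho> 1 \<noteq> -\<infinity>"
    and "fatou_on_excess M L S0 S1 r \<rho>"
  shows "\<forall>\<nu>\<ge>0. rho_opt M S0 S1 r \<rho> \<nu> \<noteq> {} \<and> compact (rho_opt M S0 S1 r \<rho> \<nu>)"
proof (intro allI impI)
  fix \<nu> :: real assume "\<nu> \<ge> 0"
  have integrable: "\<And>i. integrable M (\<lambda>\<omega>. ret S0 S1 \<omega> $ i)" and L: "\<And>\<pi>. excess_ret S0 S1 r \<pi> \<in> L"
    using assms(6,9) by blast+
  obtain \<pi>0 where "\<pi>0 \<bullet> mean_excess_ret M S0 S1 r = \<nu>" and "\<rho> (excess_ret S0 S1 r \<pi>0) < \<infinity>"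
    using finite_risk_portfolio_exists[OF assms(1) integrable assms(10) L assms(12) \<open>\<nu> \<ge> 0\<close>] .
  with fatou_on_excess_imp_seq_lower_semicontinuous[OF assms(8) L assms(14)]
    risk_measure_excess_ret_scaleR[OF assms(10) L]
    risk_pos_if_rho_opt_zero_eq_zero[OF assms(1) integrable assms(10) L assms(11)]
    risk_measure_excess_ret_not_minf[OF assms(10) L]
  show "rho_opt M S0 S1 r \<rho> \<nu> \<noteq> {} \<and> compact (rho_opt M S0 S1 r \<rho> \<nu>)"
    unfolding rho_opt_eq_argmin_on_hyperplane[OF assms(1) integrable]
    by (rule positively_homogeneous_argmin_on_hyperplane)
qed

end
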